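(* Let $k\ge1$, let $r\in\mathbb{Z}_k^*$ (represented by an integer $1\le r<k$ when used as an exponent), let $\varphi:\mathbb{Z}_k\to\mathbb{Z}_k$, $x\mapsto xr$, be the corresponding automorphism of the additive group $\mathbb{Z}_k$, let $m$ be the multiplicative order of $r$ in $\mathbb{Z}_k$, and let $n$ be a positive multiple of $m$. Then the extended power functions $\Pi:\mathbb{Z}_k\to\mathbb{Z}_n$ of $\varphi$ are exactly the functions \[ \Pi_{r,s,t}(x)\equiv1+ms\sum_{i=1}^{x}t^{i-1}\pmod n,\qquad x\in\mathbb{Z}_k\ (\text{represented by } 0\le x<k), \] where $s\in\mathbb{Z}_{n/m}$ and $t\in\mathbb{Z}_{n/m}^*$ satisfy: (a) $t^{r-1}\equiv1\pmod{n/m}$; (b) $s\sum_{i=1}^{k}t^{i-1}\equiv0\pmod{n/m}$; (c) $s\sum_{i=1}^{m}\big(\sum_{j=1}^{r}t^{j-1}\big)^{i-1}\equiv t-1\pmod{n/m}$. Moreover, for fixed $r$, $\Pi_{r,s,t}=\Pi_{r,s',t'}$ if and only if $s\equiv s'\pmod{n/m}$ and $s(t-t')\equiv0\pmod{n/m}$.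
   Context: A skew-morphism of a finite group $A$ is a permutation $\varphi$ of $A$ fixing the identity for which there is $\pi:A\to\mathbb{Z}_m$ ($m$ the order of $\varphi$) with $\varphi(xy)=\varphi(x)\varphi^{\pi(x)}(y)$; for an automorphism, $\pi\equiv1\pmod m$. For a positive multiple $n$ of $m$, $\Pi:A\to\mathbb{Z}_n$ is an extended power function of $\varphi$ if (i) $\Pi(x)\equiv\pi(x)\pmod m$ for all $x$; (ii) $\Pi$ of the identity is $\equiv1\pmod n$; (iii) $\Pi(xy)\equiv\sum_{i=1}^{\Pi(x)}\Pi(\varphi^{i-1}(y))\pmod n$ for all $x,y\in A$ (here $A=\mathbb{Z}_k$ is written additively, so $xy$ means $x+y$). *)

theory Defs
  imports "HOL-Number_Theory.Number_Theory"
begin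

text \<open>Elements of Z_k are represented by naturals 0..<k, elements of Z_n by naturals 0..<n.
  A skew-morphism phi of Z_k (additively written) with power function pi (values taken mod m,
  m = order of phi).\<close>

definition ext_power_fun ::
  "nat \<Rightarrow> (nat \<Rightarrow> nat) \<Rightarrow> (nat \<Rightarrow> nat) \<Rightarrow> nat \<Rightarrow> nat \<Rightarrow> (nat \<Rightarrow> nat) \<Rightarrow> bool" where
  "ext_power_fun k phi pw m n PP \<longleftrightarrow>
     (\<forall>x<k. PP x < n) \<and>
     (\<forall>x<k. [PP x = pw x] (mod m)) \<and>
     [PP 0 = 1] (mod n) \<and>
     (\<forall>x<k. \<forall>y<k. [PP ((x + y) mod k) = (\<Sum>i=1..PP x. PP ((phi ^^ (i - 1)) y))] (mod n))"

definition Pi_rst :: "nat \<Rightarrow> nat \<Rightarrow> nat \<Rightarrow> int \<Rightarrow> int \<Rightarrow> nat \<Rightarrow> nat" where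
  "Pi_rst k r n s t x =
     nat ((1 + int (ord k r) * s * (\<Sum>i=1..x. t ^ (i - 1))) mod int n)"

definition admissible_st :: "nat \<Rightarrow> nat \<Rightarrow> nat \<Rightarrow> int \<Rightarrow> int \<Rightarrow> bool" where
  "admissible_st k r n s t \<longleftrightarrow>
     (let m = ord k r; d = int (n div m) in
       0 \<le> s \<and> s < d \<and> 0 \<le> t \<and> t < d \<and> coprime t d \<and>
       [t ^ (r - 1) = 1] (mod d) \<and>
       [s * (\<Sum>i=1..k. t ^ (i - 1)) = 0] (mod d) \<and>
       [s * (\<Sum>i=1..m. (\<Sum>j=1..r. t ^ (j - 1)) ^ (i - 1)) = t - 1] (mod d))"

end

theory Submission
  imports Defs
begin

text \<open>
  Write \<open>\<Pi>(x) = 1 + m \<sigma>(x)\<close> and \<open>d = n / m\<close>. Since \<open>r\<^sup>m \<equiv> 1 (mod k)\<close>, the summands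
  \<open>\<Pi>(\<phi>\<^sup>i y)\<close> are \<open>m\<close>-periodic in \<open>i\<close>, so the sum of the first \<open>\<Pi>(x)\<close> of them is
  \<open>\<Pi>(y) + m \<sigma>(x) T(y)\<close> with \<open>T(y) = 1 + \<sigma>(y) + \<sigma>(y r) + \<dots> + \<sigma>(y r\<^sup>m\<^sup>-\<^sup>1)\<close>.
  Hence \<open>\<Pi>\<close> is an extended power function iff \<open>\<sigma>(0) \<equiv> 0\<close> and
  \<open>\<sigma>(x + y) \<equiv> \<sigma>(y) + \<sigma>(x) T(y)\<close> modulo \<open>d\<close>. Summing this cocycle identity along orbits
  shows that \<open>T\<close> is \<open>\<phi>\<close>-invariant and multiplicative, so \<open>T(x) \<equiv> t\<^sup>x\<close> and
  \<open>\<sigma>(x) \<equiv> s (1 + t + \<dots> + t\<^sup>x\<^sup>-\<^sup>1)\<close> with \<open>t = T(1)\<close>, \<open>s = \<sigma>(1)\<close>. Closing up at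
  \<open>x = k\<close> gives (b), \<open>T(r) = T(1)\<close> gives (a), and evaluating \<open>T(1)\<close> along the orbit of
  \<open>1\<close> gives (c); conversely (a)--(c) make \<open>s (1 + \<dots> + t\<^sup>x\<^sup>-\<^sup>1)\<close> a cocycle. Two such
  functions agree iff they agree at \<open>x = 1, 2\<close>, or, when \<open>k \<le> 2\<close> and hence \<open>m = 1\<close>,
  by (b) and (c).
\<close>

section \<open>Geometric sums\<close>

definition geom_sum :: "'a::comm_semiring_1 \<Rightarrow> nat \<Rightarrow> 'a" where
  "geom_sum t a = (\<Sum>i<a. t ^ i)"

lemma geom_sum_0 [simp]: "geom_sum t 0 = 0"
  by (simp add: geom_sum_def)

lemma geom_sum_Suc_0 [simp]: "geom_sum t (Suc 0) = 1"
  by (simp add: geom_sum_def)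

lemma geom_sum_Suc: "geom_sum t (Suc a) = 1 + t * geom_sum t a"
  unfolding geom_sum_def by (simp add: sum.lessThan_Suc_shift sum_distrib_left del: sum.lessThan_Suc)

lemma geom_sum_add: "geom_sum t (a + b) = geom_sum t a + t ^ a * geom_sum t b"
  by (induction b) (simp_all add: geom_sum_def algebra_simps power_add)

lemma geom_sum_mult: "geom_sum t (a * b) = geom_sum t a * geom_sum (t ^ a) b"
  by (induction b) (simp_all add: geom_sum_add geom_sum_Suc algebra_simps power_mult)

lemma geom_sum_closed_form: "(t - 1) * geom_sum t a = t ^ a - (1::'a::comm_ring_1)"
  by (induction a) (simp_all add: geom_sum_Suc algebra_simps)

lemma geom_sum_atLeastAtMost: "(\<Sum>i=1..a. t ^ (i - 1)) = geom_sum t a"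
  using sum_bounds_lt_plus1[of "\<lambda>i. t ^ (i - 1)" a] by (simp add: geom_sum_def)

lemma cong_geom_sum:
  fixes u v d :: int
  shows "[u = v] (mod d) \<Longrightarrow> [geom_sum u a = geom_sum v a] (mod d)"
  unfolding geom_sum_def by (intro cong_sum cong_pow) auto

lemma cong_pow_mod_exponent:
  fixes t d :: int
  assumes "[t ^ k = 1] (mod d)"
  shows "[t ^ (a mod k) = t ^ a] (mod d)"
proof -
  have "t ^ a = t ^ (a mod k) * (t ^ k) ^ (a div k)"
    by (metis mod_div_mult_eq add.commute mult.commute power_add power_mult)
  moreover have "[t ^ (a mod k) * (t ^ k) ^ (a div k) = t ^ (a mod k) * 1 ^ (a div k)] (mod d)"
    by (intro cong_mult cong_pow cong_refl assms)
  ultimately show ?thesis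
    using cong_sym by simp
qed

lemma cong_scaled_geom_sum_mod:
  fixes s t d :: int
  assumes "[s * geom_sum t k = 0] (mod d)"
  shows "[s * geom_sum t (a mod k) = s * geom_sum t a] (mod d)"
proof -
  have "s * geom_sum t a = s * geom_sum t (a mod k) + t ^ (a mod k) * geom_sum (t ^ k) (a div k) * (s * geom_sum t k)"
    using geom_sum_add[of t "a mod k" "k * (a div k)"] geom_sum_mult[of t k "a div k"]
    by (simp add: algebra_simps)
  moreover have "[t ^ (a mod k) * geom_sum (t ^ k) (a div k) * (s * geom_sum t k) = 0] (mod d)"
    using cong_mult[OF cong_refl assms] by simp
  ultimately show ?thesis
    using cong_add_lcancel_0 cong_sym by metis
qed

lemma cong_pow_pow_exponent:
  fixes t d :: int
  assumes "[t ^ r = t] (mod d)"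
  shows "[t ^ (r ^ i) = t] (mod d)"
proof (induction i)
  case (Suc i)
  have "[(t ^ (r ^ i)) ^ r = t ^ r] (mod d)"
    using Suc by (rule cong_pow)
  moreover have "t ^ (r ^ Suc i) = (t ^ (r ^ i)) ^ r"
    by (metis power_Suc2 power_mult)
  ultimately show ?case
    using assms cong_trans by simp
qed simp

lemma cong_geom_sum_pow_mult:
  fixes t d :: int
  assumes "[t ^ r = t] (mod d)"
  shows "[geom_sum t (r ^ i * y) = geom_sum t r ^ i * geom_sum t y] (mod d)"
proof -
  have split: "[geom_sum t (r ^ i * y) = geom_sum t (r ^ i) * geom_sum t y] (mod d)" for i y
    unfolding geom_sum_mult by (intro cong_mult cong_refl cong_geom_sum cong_pow_pow_exponent assms)
  have "[geom_sum t (r ^ i) = geom_sum t r ^ i] (mod d)"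
  proof (induction i)
    case (Suc i)
    have "[geom_sum t (r ^ i * r) = geom_sum t r ^ i * geom_sum t r] (mod d)"
      using split[of i r] cong_mult[OF Suc cong_refl] by (rule cong_trans)
    then show ?case
      by (simp add: mult.commute)
  qed (simp add: geom_sum_def)
  then show ?thesis
    using split cong_mult[OF _ cong_refl] cong_trans by blast
qed

lemma cong_pow_diff_one_iff:
  fixes t d :: int
  assumes "coprime t d" "1 \<le> r"
  shows "[t ^ (r - 1) = 1] (mod d) \<longleftrightarrow> [t ^ r = t] (mod d)"
proof -
  have "t ^ r = t * t ^ (r - 1)"
    using \<open>1 \<le> r\<close> by (simp flip: power_Suc)
  then show ?thesis
    using cong_mult_lcancel[OF \<open>coprime t d\<close>, of "t ^ (r - 1)" 1] by simp
qed

lemma periodic_mult_add: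
  fixes f :: "nat \<Rightarrow> 'a"
  assumes "\<And>i. f (i + m) = f i"
  shows "f (j * m + i) = f i"
  using assms by (induction j) (simp_all, metis add.assoc add.commute)

lemma sum_lessThan_mult_periodic:
  fixes f :: "nat \<Rightarrow> 'a::comm_semiring_1"
  assumes "\<And>i. f (i + m) = f i"
  shows "(\<Sum>i<q * m. f i) = of_nat q * (\<Sum>i<m. f i)"
proof -
  have "(\<Sum>i\<in>{j * m..<j * m + m}. f i) = (\<Sum>i<m. f i)" for j
    using sum.shift_bounds_nat_ivl[of f 0 "j * m" m] periodic_mult_add[of f, OF assms]
    by (simp add: atLeast0LessThan add.commute)
  then show ?thesis
    by (simp flip: sum.nat_group)
qed

lemma sum_lessThan_periodic_one_plus_mult:
  fixes f :: "nat \<Rightarrow> int"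
  assumes "0 < m" and periodic: "\<And>i. f (i + m) = f i" and N: "int N = 1 + int m * q"
  shows "(\<Sum>i<N. f i) = f 0 + q * (\<Sum>i<m. f i)"
proof (cases "q \<ge> 0")
  case True
  then have "N = Suc (nat q * m)"
    using N by (simp add: nat_int_comparison(1) algebra_simps)
  then show ?thesis
    using sum_lessThan_mult_periodic[of f m "nat q", OF periodic]
      periodic_mult_add[of f m "nat q" 0, OF periodic] True
    by simp
next
  case False
  then have "int m * q < 0"
    using \<open>0 < m\<close> by (simp add: mult_pos_neg)
  with N have "N = 0" "int m * (- q) = 1"
    by simp_all
  then have "m = 1" "q = -1" "N = 0"
    unfolding zmult_eq_1_iff by simp_all
  then show ?thesis
    by simp
qed

lemma cong_add_mult_cancel_iff:
  fixes a b c m d :: int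
  assumes "m \<noteq> 0"
  shows "[c + m * a = c + m * b] (mod m * d) \<longleftrightarrow> [a = b] (mod d)"
  using assms by (simp add: cong_add_lcancel cong_iff_dvd_diff flip: right_diff_distrib)

text \<open>The \<open>\<sigma>\<close> of \<open>\<Pi>(x) = 1 + m \<sigma>(x)\<close>.\<close>

definition excess :: "nat \<Rightarrow> nat \<Rightarrow> int" where
  "excess m p = (int p - 1) div int m"

lemma excess_eq:
  assumes "[p = 1] (mod m)"
  shows "int p = 1 + int m * excess m p"
proof -
  have "int m dvd int p - 1"
    using assms by (simp add: cong_iff_dvd_diff flip: cong_int_iff)
  then show ?thesis
    by (simp add: excess_def)
qed

lemma eq_one_plus_mult_mod_iff:
  assumes "0 < m" "0 < d"
  shows "p = nat ((1 + int m * b) mod int (m * d)) \<longleftrightarrow>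
    p < m * d \<and> [p = 1] (mod m) \<and> [excess m p = b] (mod int d)"
proof
  assume p: "p = nat ((1 + int m * b) mod int (m * d))"
  define c where "c = b - int d * ((1 + int m * b) div int (m * d))"
  have "int p = (1 + int m * b) mod int (m * d)"
    using p assms by simp
  also have "\<dots> = 1 + int m * c"
    by (simp add: c_def algebra_simps flip: minus_div_mult_eq_mod)
  finally have p_eq: "int p = 1 + int m * c" .
  have "[p = 1] (mod m)"
    using p_eq by (simp add: cong_iff_dvd_diff flip: cong_int_iff)
  moreover have "excess m p = c"
    using p_eq assms by (simp add: excess_def)
  ultimately show "p < m * d \<and> [p = 1] (mod m) \<and> [excess m p = b] (mod int d)"
    using p assms by (simp add: c_def nat_less_iff cong_iff_dvd_diff)
next
  assume "p < m * d \<and> [p = 1] (mod m) \<and> [excess m p = b] (mod int d)"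
  then have "p < m * d" "int p = 1 + int m * excess m p" "[excess m p = b] (mod int d)"
    using excess_eq by blast+
  have "int p = int p mod int (m * d)"
    using \<open>p < m * d\<close> by (simp only: flip: of_nat_mod) simp
  also have "\<dots> = (1 + int m * excess m p) mod int (m * d)"
    using \<open>int p = 1 + int m * excess m p\<close> by simp
  also have "\<dots> = (1 + int m * b) mod int (m * d)"
    using cong_add_mult_cancel_iff[of "int m" 1 "excess m p" b "int d"] \<open>0 < m\<close>
      \<open>[excess m p = b] (mod int d)\<close> by (simp add: cong_def)
  finally show "p = nat ((1 + int m * b) mod int (m * d))"
    by simp
qed

lemma one_plus_mult_mod_eq_iff:
  assumes "0 < m" "0 < d"
  shows "nat ((1 + int m * a) mod int (m * d)) = nat ((1 + int m * b) mod int (m * d)) \<longleftrightarrow>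
    [a = b] (mod int d)"
proof -
  let ?p = "nat ((1 + int m * a) mod int (m * d))"
  have p: "?p < m * d" "[?p = 1] (mod m)" "[excess m ?p = a] (mod int d)"
    using eq_one_plus_mult_mod_iff[OF assms, of ?p a] by simp_all
  then have "[excess m ?p = b] (mod int d) \<longleftrightarrow> [a = b] (mod int d)"
    using cong_sym cong_trans by metis
  then show ?thesis
    using eq_one_plus_mult_mod_iff[OF assms, of ?p b] p(1,2) by simp
qed

section \<open>The cocycle equation\<close>

lemma funpow_mult_mod:
  fixes y k r :: nat
  shows "y < k \<Longrightarrow> ((\<lambda>z. z * r mod k) ^^ i) y = y * r ^ i mod k"
  by (induction i) (simp_all add: mod_mult_left_eq mult.assoc mult.commute[of r])

text \<open>\<open>m * twist k r m \<sigma> y\<close> is the sum of \<open>1 + m * \<sigma>\<close> over one period of the orbit of \<open>y\<close>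
  under \<open>x \<mapsto> x * r\<close>.\<close>

definition twist :: "nat \<Rightarrow> nat \<Rightarrow> nat \<Rightarrow> (nat \<Rightarrow> int) \<Rightarrow> nat \<Rightarrow> int" where
  "twist k r m \<sigma> y = 1 + (\<Sum>i<m. \<sigma> (y * r ^ i mod k))"

lemma ext_power_relation_iff_cocycle_eq:
  fixes P :: "nat \<Rightarrow> nat"
  assumes "0 < m" "[r ^ m = 1] (mod k)" "\<And>z. z < k \<Longrightarrow> [P z = 1] (mod m)" "x < k" "y < k"
  defines "\<sigma> \<equiv> \<lambda>z. excess m (P z)"
  shows "[P ((x + y) mod k) = (\<Sum>i=1..P x. P (((\<lambda>z. z * r mod k) ^^ (i - 1)) y))] (mod (m * d))
     \<longleftrightarrow> [\<sigma> ((x + y) mod k) = \<sigma> y + \<sigma> x * twist k r m \<sigma> y] (mod int d)"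
proof -
  have P_eq: "int (P z) = 1 + int m * \<sigma> z" if "z < k" for z
    unfolding \<sigma>_def using assms(3)[OF that] by (rule excess_eq)
  define f where "f i = int (P (y * r ^ i mod k))" for i
  have "f (i + m) = f i" for i
  proof -
    have "[y * r ^ i * r ^ m = y * r ^ i * 1] (mod k)"
      by (intro cong_mult cong_refl assms(2))
    then show ?thesis
      by (simp add: f_def cong_def power_add mult.assoc)
  qed
  moreover have "(\<Sum>i<m. f i) = int m * twist k r m \<sigma> y"
    using P_eq \<open>x < k\<close> by (simp add: f_def twist_def sum.distrib sum_distrib_left distrib_left)
  ultimately have "(\<Sum>i<P x. f i) = 1 + int m * (\<sigma> y + \<sigma> x * twist k r m \<sigma> y)"
    using sum_lessThan_periodic_one_plus_mult[OF \<open>0 < m\<close> _ P_eq[OF \<open>x < k\<close>]] P_eq[OF \<open>y < k\<close>]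
    by (simp add: f_def \<open>y < k\<close> algebra_simps)
  moreover have "(\<Sum>i=1..P x. P (((\<lambda>z. z * r mod k) ^^ (i - 1)) y)) = (\<Sum>i<P x. P (y * r ^ i mod k))"
    using sum_bounds_lt_plus1[of "\<lambda>i. P (((\<lambda>z. z * r mod k) ^^ (i - 1)) y)" "P x"]
    by (simp add: funpow_mult_mod \<open>y < k\<close>)
  ultimately show ?thesis
    using P_eq[of "(x + y) mod k"] \<open>x < k\<close> cong_add_mult_cancel_iff[of "int m" 1] \<open>0 < m\<close>
    by (simp add: f_def flip: cong_int_iff)
qed

lemma twist_mult:
  assumes "[r ^ m = 1] (mod k)"
  shows "twist k r m \<sigma> (y * r mod k) = twist k r m \<sigma> y"
proof -
  define h where "h j = \<sigma> (y * r ^ j mod k)" for j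
  have "[y * r ^ m = y * 1] (mod k)"
    by (intro cong_mult cong_refl assms)
  then have "h m = h 0"
    by (simp add: h_def cong_def)
  then have "(\<Sum>j<m. h (Suc j)) = (\<Sum>j<m. h j)"
    using sum.lessThan_Suc_shift[of h m] by simp
  then show ?thesis
    by (simp add: twist_def h_def mod_mult_left_eq mult.assoc)
qed

lemma twist_mult_pow:
  assumes "[r ^ m = 1] (mod k)"
  shows "twist k r m \<sigma> (y * r ^ i mod k) = twist k r m \<sigma> y"
proof (induction i)
  case (Suc i)
  have "y * r ^ Suc i mod k = (y * r ^ i mod k) * r mod k"
    by (simp add: mod_mult_left_eq mult.assoc mult.commute[of r])
  then show ?case
    using twist_mult[OF assms, of \<sigma> "y * r ^ i mod k"] Suc by simp
qed (simp add: twist_def mod_mult_left_eq)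

locale power_cocycle =
  fixes k r m d :: nat and \<sigma> :: "nat \<Rightarrow> int"
  assumes k_pos: "0 < k"
    and r_pow_m: "[r ^ m = 1] (mod k)"
    and sigma_zero: "[\<sigma> 0 = 0] (mod int d)"
    and cocycle_eq: "x < k \<Longrightarrow> y < k \<Longrightarrow>
      [\<sigma> ((x + y) mod k) = \<sigma> y + \<sigma> x * twist k r m \<sigma> y] (mod int d)"
begin

abbreviation T :: "nat \<Rightarrow> int" where
  "T \<equiv> twist k r m \<sigma>"

lemma twist_add:
  assumes "x < k" "y < k"
  shows "[T ((x + y) mod k) = T x * T y] (mod int d)"
proof -
  have "[\<sigma> ((x + y) mod k * r ^ i mod k) = \<sigma> (y * r ^ i mod k) + \<sigma> (x * r ^ i mod k) * T y] (mod int d)"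
    for i
  proof -
    have "(x + y) mod k * r ^ i mod k = (x * r ^ i mod k + y * r ^ i mod k) mod k"
      by (simp add: mod_add_eq mod_mult_left_eq distrib_right)
    then show ?thesis
      using cocycle_eq[of "x * r ^ i mod k" "y * r ^ i mod k"] twist_mult_pow[OF r_pow_m] k_pos by simp
  qed
  then have "[T ((x + y) mod k) = 1 + (\<Sum>i<m. \<sigma> (y * r ^ i mod k) + \<sigma> (x * r ^ i mod k) * T y)] (mod int d)"
    unfolding twist_def[of k r m \<sigma> "(x + y) mod k"] by (intro cong_add cong_sum cong_refl)
  also have "1 + (\<Sum>i<m. \<sigma> (y * r ^ i mod k) + \<sigma> (x * r ^ i mod k) * T y) = T x * T y"
    by (simp add: twist_def[of k r m \<sigma> x] twist_def[of k r m \<sigma> y] sum.distrib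
        flip: sum_distrib_right) (simp add: twist_def algebra_simps)
  finally show ?thesis .
qed

lemma twist_zero: "[T 0 = 1] (mod int d)"
  using cong_add[OF cong_refl[of 1] cong_sum[of "{..<m}" "\<lambda>_. \<sigma> 0" "\<lambda>_. 0"]] sigma_zero
  by (simp add: twist_def)

definition s :: int where
  "s = \<sigma> (1 mod k)"

definition t :: int where
  "t = T (1 mod k)"

lemma twist_eq_pow: "x \<le> k \<Longrightarrow> [T (x mod k) = t ^ x] (mod int d)"
proof (induction x)
  case (Suc x)
  then have "[T (Suc x mod k) = T x * t] (mod int d)"
    using twist_add[OF _ mod_less_divisor[OF k_pos, of 1], of x] unfolding mod_add_right_eq by (simp add: t_def)
  also have "[T x * t = t ^ x * t] (mod int d)"
    using Suc by (intro cong_mult cong_refl) simp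
  finally show ?case
    by (simp add: mult.commute)
qed (simp add: twist_zero)

lemma sigma_eq_geom_sum: "x \<le> k \<Longrightarrow> [\<sigma> (x mod k) = s * geom_sum t x] (mod int d)"
proof (induction x)
  case (Suc x)
  then have "[\<sigma> (Suc x mod k) = s + \<sigma> x * t] (mod int d)"
    using cocycle_eq[OF _ mod_less_divisor[OF k_pos, of 1], of x] unfolding mod_add_right_eq by (simp add: s_def t_def)
  also have "[s + \<sigma> x * t = s + s * geom_sum t x * t] (mod int d)"
    using Suc by (intro cong_add cong_mult cong_refl) simp
  also have "s + s * geom_sum t x * t = s * geom_sum t (Suc x)"
    by (simp add: geom_sum_Suc algebra_simps)
  finally show ?case .
qed (simp add: sigma_zero)

lemma t_pow_k: "[t ^ k = 1] (mod int d)"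
  using cong_trans[OF cong_sym twist_zero] twist_eq_pow[of k] by simp

lemma coprime_t: "coprime t (int d)"
  using cong_imp_coprime[OF cong_sym[OF t_pow_k]] k_pos by simp

lemma t_pow_r: "[t ^ r = t] (mod int d)"
proof -
  have "T (r mod k) = t"
    using twist_mult[OF r_pow_m, of \<sigma> "1 mod k"] unfolding mod_mult_left_eq by (simp add: t_def)
  then have "[t = t ^ (r mod k)] (mod int d)"
    using twist_eq_pow[of "r mod k"] k_pos by simp
  then show ?thesis
    using cong_pow_mod_exponent[OF t_pow_k, of r] by (metis cong_sym cong_trans)
qed

lemma scaled_geom_sum_k: "[s * geom_sum t k = 0] (mod int d)"
  using cong_trans[OF cong_sym sigma_zero] sigma_eq_geom_sum[of k] by simp

lemma scaled_geom_sum_orbit: "[s * geom_sum (geom_sum t r) m = t - 1] (mod int d)"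
proof -
  have "[\<sigma> (r ^ i mod k) = s * geom_sum t r ^ i] (mod int d)" for i
  proof -
    have "[\<sigma> (r ^ i mod k) = s * geom_sum t (r ^ i mod k)] (mod int d)"
      using sigma_eq_geom_sum[of "r ^ i mod k"] k_pos by simp
    also have "[s * geom_sum t (r ^ i mod k) = s * geom_sum t (r ^ i)] (mod int d)"
      by (rule cong_scaled_geom_sum_mod[OF scaled_geom_sum_k])
    also have "[s * geom_sum t (r ^ i) = s * geom_sum t r ^ i] (mod int d)"
      using cong_geom_sum_pow_mult[OF t_pow_r, of i 1] by (intro cong_mult cong_refl) simp
    finally show ?thesis .
  qed
  then have "[(\<Sum>i<m. \<sigma> (r ^ i mod k)) = (\<Sum>i<m. s * geom_sum t r ^ i)] (mod int d)"
    by (rule cong_sum)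
  then have "[(\<Sum>i<m. s * geom_sum t r ^ i) = (\<Sum>i<m. \<sigma> (r ^ i mod k))] (mod int d)"
    by (rule cong_sym)
  moreover have "s * geom_sum (geom_sum t r) m = (\<Sum>i<m. s * geom_sum t r ^ i)"
    by (simp add: geom_sum_def[of "geom_sum t r"] sum_distrib_left)
  moreover have "(\<Sum>i<m. \<sigma> (r ^ i mod k)) = t - 1"
    by (simp add: t_def twist_def mod_mult_left_eq)
  ultimately show ?thesis
    by simp
qed

end

lemma power_cocycle_geometric:
  fixes s t :: int
  assumes "0 < k" "[r ^ m = 1] (mod k)"
    and t_pow_r: "[t ^ r = t] (mod int d)"
    and s_k: "[s * geom_sum t k = 0] (mod int d)"
    and s_orbit: "[s * geom_sum (geom_sum t r) m = t - 1] (mod int d)"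
    and \<sigma>: "\<And>x. x < k \<Longrightarrow> [\<sigma> x = s * geom_sum t x] (mod int d)"
  shows "power_cocycle k r m d \<sigma>"
proof
  have \<sigma>_mod: "[\<sigma> (a mod k) = s * geom_sum t a] (mod int d)" for a
    using cong_trans[OF \<sigma> cong_scaled_geom_sum_mod[OF s_k]] \<open>0 < k\<close> by simp
  have twist: "[twist k r m \<sigma> y = t ^ y] (mod int d)" for y
  proof -
    have "[\<sigma> (y * r ^ i mod k) = s * geom_sum t r ^ i * geom_sum t y] (mod int d)" for i
      using cong_trans[OF \<sigma>_mod cong_mult[OF cong_refl cong_geom_sum_pow_mult[OF t_pow_r]]]
      by (simp add: mult.commute mult.left_commute)
    then have "[(\<Sum>i<m. \<sigma> (y * r ^ i mod k)) = (\<Sum>i<m. s * geom_sum t r ^ i * geom_sum t y)] (mod int d)"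
      by (rule cong_sum)
    also have "(\<Sum>i<m. s * geom_sum t r ^ i * geom_sum t y) = s * geom_sum (geom_sum t r) m * geom_sum t y"
      by (simp add: geom_sum_def[of "geom_sum t r"] sum_distrib_left sum_distrib_right)
    also have "[s * geom_sum (geom_sum t r) m * geom_sum t y = (t - 1) * geom_sum t y] (mod int d)"
      by (intro cong_mult cong_refl s_orbit)
    finally show ?thesis
      unfolding twist_def geom_sum_closed_form using cong_add_lcancel[of 1 _ "t ^ y - 1"] by simp
  qed
  show "[\<sigma> 0 = 0] (mod int d)"
    using \<sigma>_mod[of 0] by simp
  fix x y
  assume "x < k" "y < k"
  have "[\<sigma> ((x + y) mod k) = s * geom_sum t (y + x)] (mod int d)"
    using \<sigma>_mod by (simp add: add.commute)
  also have "s * geom_sum t (y + x) = s * geom_sum t y + s * geom_sum t x * t ^ y"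
    unfolding geom_sum_add by (simp add: algebra_simps)
  also have "[\<dots> = \<sigma> y + \<sigma> x * twist k r m \<sigma> y] (mod int d)"
    by (intro cong_add cong_mult cong_sym[OF \<sigma>[OF \<open>x < k\<close>]] cong_sym[OF \<sigma>[OF \<open>y < k\<close>]]
        cong_sym[OF twist])
  finally show "[\<sigma> ((x + y) mod k) = \<sigma> y + \<sigma> x * twist k r m \<sigma> y] (mod int d)" .
qed (use assms in simp_all)

definition admissible_params :: "nat \<Rightarrow> nat \<Rightarrow> nat \<Rightarrow> nat \<Rightarrow> int \<Rightarrow> int \<Rightarrow> bool" where
  "admissible_params k r m d s t \<longleftrightarrow>
     0 \<le> s \<and> s < int d \<and> 0 \<le> t \<and> t < int d \<and> coprime t (int d) \<and>
     [t ^ (r - 1) = 1] (mod int d) \<and> [s * geom_sum t k = 0] (mod int d) \<and>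
     [s * geom_sum (geom_sum t r) m = t - 1] (mod int d)"

lemma power_cocycle_iff_geometric:
  assumes "0 < k" "1 \<le> r" "[r ^ m = 1] (mod k)" "0 < d"
  shows "power_cocycle k r m d \<sigma> \<longleftrightarrow>
    (\<exists>s t. admissible_params k r m d s t \<and> (\<forall>x<k. [\<sigma> x = s * geom_sum t x] (mod int d)))"
proof
  assume "power_cocycle k r m d \<sigma>"
  then interpret power_cocycle k r m d \<sigma> .
  define s' t' where "s' = s mod int d" and "t' = t mod int d"
  have s': "[s = s'] (mod int d)" and t': "[t = t'] (mod int d)"
    by (simp_all add: s'_def t'_def cong_def)
  have scaled: "[s * geom_sum t a = s' * geom_sum t' a] (mod int d)"
    and scaled_orbit: "[s * geom_sum (geom_sum t r) a = s' * geom_sum (geom_sum t' r) a] (mod int d)" for a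
    by (intro cong_mult cong_geom_sum s' t')+
  have "coprime t' (int d)"
    using cong_imp_coprime[OF t' coprime_t] .
  moreover have "[t' ^ (r - 1) = 1] (mod int d)"
    using cong_pow_diff_one_iff[OF \<open>coprime t' (int d)\<close> \<open>1 \<le> r\<close>] t_pow_r
    by (metis cong_pow cong_sym cong_trans t')
  moreover have "[s' * geom_sum t' k = 0] (mod int d)"
    using scaled_geom_sum_k scaled by (metis cong_sym cong_trans)
  moreover have "[s' * geom_sum (geom_sum t' r) m = t' - 1] (mod int d)"
    using scaled_geom_sum_orbit scaled_orbit cong_diff[OF t' cong_refl[of 1]]
    by (metis cong_sym cong_trans)
  ultimately have "admissible_params k r m d s' t'"
    using \<open>0 < d\<close> by (simp add: admissible_params_def s'_def t'_def)
  moreover have "\<forall>x<k. [\<sigma> x = s' * geom_sum t' x] (mod int d)"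
    using sigma_eq_geom_sum scaled by (metis cong_trans less_imp_le_nat mod_less)
  ultimately show "\<exists>s t. admissible_params k r m d s t \<and> (\<forall>x<k. [\<sigma> x = s * geom_sum t x] (mod int d))"
    by blast
next
  assume "\<exists>s t. admissible_params k r m d s t \<and> (\<forall>x<k. [\<sigma> x = s * geom_sum t x] (mod int d))"
  then obtain s t where "admissible_params k r m d s t" "\<forall>x<k. [\<sigma> x = s * geom_sum t x] (mod int d)"
    by blast
  then show "power_cocycle k r m d \<sigma>"
    using power_cocycle_geometric[OF \<open>0 < k\<close> \<open>[r ^ m = 1] (mod k)\<close>]
      cong_pow_diff_one_iff[OF _ \<open>1 \<le> r\<close>] unfolding admissible_params_def by blast
qed

lemma ext_power_fun_iff_power_cocycle:
  assumes "0 < k" "0 < m" "[r ^ m = 1] (mod k)"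
  shows "ext_power_fun k (\<lambda>z. z * r mod k) (\<lambda>_. 1) m (m * d) P \<longleftrightarrow>
    (\<forall>x<k. P x < m * d \<and> [P x = 1] (mod m)) \<and> power_cocycle k r m d (\<lambda>z. excess m (P z))"
proof (cases "\<forall>x<k. [P x = 1] (mod m)")
  case True
  have "int (P 0) = 1 + int m * excess m (P 0)"
    using True \<open>0 < k\<close> excess_eq by blast
  then have "[P 0 = 1] (mod m * d) \<longleftrightarrow> [excess m (P 0) = 0] (mod int d)"
    using cong_add_mult_cancel_iff[of "int m" 1 _ 0 "int d"] \<open>0 < m\<close>
    by (simp flip: cong_int_iff)
  then show ?thesis
    using True ext_power_relation_iff_cocycle_eq[OF \<open>0 < m\<close> \<open>[r ^ m = 1] (mod k)\<close>, of P _ _ d] assms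
    unfolding ext_power_fun_def power_cocycle_def by auto
qed (auto simp: ext_power_fun_def)

section \<open>Uniqueness of the parameters\<close>

lemma ord_eq_1_if_le_2:
  fixes k r :: nat
  assumes "coprime r k" "k \<le> 2"
  shows "ord k r = 1"
proof -
  have "[r = 1] (mod k)"
  proof (cases "k = 2")
    case True
    then show ?thesis
      using assms(1) by (simp add: cong_def odd_iff_mod_2_eq_one)
  next
    case False
    with assms show ?thesis
      by (auto simp: le_Suc_eq numeral_2_eq_2)
  qed
  then show ?thesis
    by (simp add: ord_eq_Suc_0_iff)
qed

lemma scaled_geom_sums_cong_iff:
  fixes s t s' t' d :: int
  assumes "0 < k" "coprime r k"
    and "[s * geom_sum t k = 0] (mod d)" "[s' * geom_sum t' k = 0] (mod d)"
    and "[s * geom_sum (geom_sum t r) (ord k r) = t - 1] (mod d)"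
    and "[s' * geom_sum (geom_sum t' r) (ord k r) = t' - 1] (mod d)"
  shows "(\<forall>x<k. [s * geom_sum t x = s' * geom_sum t' x] (mod d)) \<longleftrightarrow>
    [s = s'] (mod d) \<and> [s * (t - t') = 0] (mod d)"
proof
  assume sums: "\<forall>x<k. [s * geom_sum t x = s' * geom_sum t' x] (mod d)"
  have s_s': "d dvd s - s'"
  proof (cases "k = 1")
    case True
    then show ?thesis
      using assms(3,4) by (simp add: cong_iff_dvd_diff flip: dvd_diff_commute)
  next
    case False
    then have "1 < k"
      using \<open>0 < k\<close> by linarith
    then show ?thesis
      using sums[rule_format, of 1] by (simp add: cong_iff_dvd_diff)
  qed
  have "d dvd s * (t - t')"
  proof (cases "k \<le> 2")
    case True
    then have "d dvd (t - 1) - s" "d dvd (t' - 1) - s'"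
      using assms(5,6) ord_eq_1_if_le_2[OF assms(2)]
      by (simp_all add: cong_iff_dvd_diff dvd_diff_commute)
    moreover have "s * (t - t') = s * (((t - 1) - s) - ((t' - 1) - s') + (s - s'))"
      by (simp add: algebra_simps)
    ultimately show ?thesis
      using s_s' by (metis dvd_add dvd_diff dvd_mult)
  next
    case False
    then have "[s * geom_sum t 2 = s' * geom_sum t' 2] (mod d)"
      using sums by simp
    then have "d dvd (s + s * t) - (s' + s' * t')"
      by (simp add: cong_iff_dvd_diff geom_sum_def numeral_2_eq_2 algebra_simps)
    moreover have "s * (t - t') = ((s + s * t) - (s' + s' * t')) - (s - s') * (1 + t')"
      by (simp add: algebra_simps)
    ultimately show ?thesis
      using s_s' by (metis dvd_diff dvd_mult2)
  qed
  with s_s' show "[s = s'] (mod d) \<and> [s * (t - t') = 0] (mod d)"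
    by (simp add: cong_iff_dvd_diff)
next
  assume "[s = s'] (mod d) \<and> [s * (t - t') = 0] (mod d)"
  then have s_s': "d dvd s - s'" and s_t_t': "d dvd s * (t - t')"
    by (simp_all add: cong_iff_dvd_diff)
  show "\<forall>x<k. [s * geom_sum t x = s' * geom_sum t' x] (mod d)"
  proof (intro allI impI)
    fix x
    have "d dvd s * (t ^ i - t' ^ i)" for i
      using s_t_t' by (simp add: power_diff_sumr2 mult.assoc[symmetric])
    then have "d dvd s * geom_sum t x - s * geom_sum t' x"
      by (simp add: geom_sum_def sum_distrib_left dvd_sum flip: sum_subtractf right_diff_distrib)
    moreover have "d dvd s * geom_sum t' x - s' * geom_sum t' x"
      using s_s' by (simp flip: left_diff_distrib)
    ultimately show "[s * geom_sum t x = s' * geom_sum t' x] (mod d)"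
      unfolding cong_iff_dvd_diff by (metis diff_add_cancel dvd_add add_diff_eq)
  qed
qed

lemma Pi_rst_eq:
  assumes "n = ord k r * d"
  shows "Pi_rst k r n s t x = nat ((1 + int (ord k r) * (s * geom_sum t x)) mod int (ord k r * d))"
  unfolding Pi_rst_def geom_sum_atLeastAtMost by (simp add: assms mult.assoc)

lemma admissible_st_iff:
  assumes "n = ord k r * d" "0 < ord k r"
  shows "admissible_st k r n s t \<longleftrightarrow> admissible_params k r (ord k r) d s t"
  unfolding admissible_st_def admissible_params_def geom_sum_atLeastAtMost Let_def
  using assms by simp

theorem lemma5p2:
  fixes k r n :: nat
  assumes "k \<ge> 1" and "1 \<le> r" and "r < k \<or> r = 1" and "coprime r k"
    and "n > 0" and "ord k r dvd n"
  shows "(\<forall>PP. ext_power_fun k (\<lambda>x. x * r mod k) (\<lambda>_. 1) (ord k r) n PP \<longleftrightarrow>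
            (\<exists>s t. admissible_st k r n s t \<and> (\<forall>x<k. PP x = Pi_rst k r n s t x)))
       \<and> (\<forall>s t s' t'. admissible_st k r n s t \<longrightarrow> admissible_st k r n s' t' \<longrightarrow>
            ((\<forall>x<k. Pi_rst k r n s t x = Pi_rst k r n s' t' x) \<longleftrightarrow>
              [s = s'] (mod int (n div ord k r)) \<and>
              [s * (t - t') = 0] (mod int (n div ord k r))))"
proof -
  define m d where "m = ord k r" and "d = n div ord k r"
  have "0 < k" "0 < m" "[r ^ m = 1] (mod k)"
    using assms ord[of r k] by (simp_all add: m_def coprime_commute)
  have n: "n = m * d"
    using \<open>ord k r dvd n\<close> by (simp add: m_def d_def)
  with \<open>n > 0\<close> have "0 < d"
    by simp
  note Pi = Pi_rst_eq[OF n[unfolded m_def], folded m_def]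
  note admissible = admissible_st_iff[OF n[unfolded m_def] \<open>0 < m\<close>[unfolded m_def], folded m_def]
  have "ext_power_fun k (\<lambda>x. x * r mod k) (\<lambda>_. 1) m n P \<longleftrightarrow>
      (\<forall>x<k. P x < m * d \<and> [P x = 1] (mod m)) \<and> power_cocycle k r m d (\<lambda>z. excess m (P z))" for P
    using ext_power_fun_iff_power_cocycle[OF \<open>0 < k\<close> \<open>0 < m\<close> \<open>[r ^ m = 1] (mod k)\<close>] n by simp
  also have "\<dots> P \<longleftrightarrow> (\<exists>s t. admissible_st k r n s t \<and> (\<forall>x<k. P x = Pi_rst k r n s t x))" for P
    unfolding power_cocycle_iff_geometric[OF \<open>0 < k\<close> \<open>1 \<le> r\<close> \<open>[r ^ m = 1] (mod k)\<close> \<open>0 < d\<close>]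
      admissible Pi eq_one_plus_mult_mod_iff[OF \<open>0 < m\<close> \<open>0 < d\<close>]
    by blast
  moreover have "(\<forall>x<k. Pi_rst k r n s t x = Pi_rst k r n s' t' x) \<longleftrightarrow>
      [s = s'] (mod int d) \<and> [s * (t - t') = 0] (mod int d)"
    if "admissible_st k r n s t" "admissible_st k r n s' t'" for s t s' t'
    using that scaled_geom_sums_cong_iff[OF \<open>0 < k\<close> \<open>coprime r k\<close>, of s t "int d" s' t']
    unfolding Pi one_plus_mult_mod_eq_iff[OF \<open>0 < m\<close> \<open>0 < d\<close>]
    by (simp add: admissible admissible_params_def m_def)
  ultimately show ?thesis
    unfolding m_def d_def by blast
qed

end
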